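(* With the notation of the context, for every $\rho\in(-1,1)$ we have $D\le p\le G$ and $$V_D(x_0,s_0,\lambda)\le V(x_0,s_0,\lambda)\le V_G(x_0,s_0,\lambda).$$
   Context: Fix $T>0$, $r,\nu,\mu,x_0\in\mathbb R$, $\eta>0$, $\sigma>0$, $\rho\in(-1,1)$, $s_0>0$, $\lambda>0$, $\gamma>0$; $N$ is a standard Gaussian random variable; $W$ is the Lambert function (inverse of $x\in(-1,\infty)\mapsto xe^x$). Let $\theta=\lambda\gamma(1-\rho^2)$, $w=W\left(s_0\eta^2Te^{(\nu-\eta\rho\frac{\mu-r}{\sigma}-\frac{\eta^2}{2})T}\theta\right)$, $$D=\frac{\lambda e^{-rT}}{\theta\eta^2T}w\left(1+\frac w2\right),\qquad G=\frac{\lambda e^{-rT}}{\theta}\frac{w}{\eta^2T}\left(e^{\frac{\eta^2}{2}T}+\frac w2\right).$$ The asking reservation price of $\lambda$ units of the non-traded stock and the associated value function are $$p=-\frac{e^{-rT}}{\gamma(1-\rho^2)}\ln\mathbb E\exp\left(-\theta s_0e^{(\nu-\eta\rho\frac{\mu-r}{\sigma}-\frac{\eta^2}{2})T}e^{\eta\sqrt TN}\right),\qquad V(x_0,s_0,\lambda)=-\frac1\gamma\exp\left(-\gamma e^{rT}(x_0+p)-\frac{(\mu-r)^2}{2\sigma^2}T\right),$$ (model: non-traded $dS=S(\nu dt+\eta dZ)$, traded $dP=P(\mu dt+\sigma dB)$, correlation $\rho$, bond rate $r$, utility $-\frac1\gamma e^{-\gamma x}$), and for $X\in\{D,G\}$,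 $$V_X(x_0,s_0,\lambda)=-\frac1\gamma\exp\left(-\gamma e^{rT}(x_0+X)-\frac{(\mu-r)^2}{2\sigma^2}T\right).$$ *)

theory Defs
  imports "HOL-Probability.Probability"
begin

definition lambert_W :: "real \<Rightarrow> real" where
  "lambert_W y = (THE w. w > -1 \<and> w * exp w = y)"

definition drift :: "real \<Rightarrow> real \<Rightarrow> real \<Rightarrow> real \<Rightarrow> real \<Rightarrow> real \<Rightarrow> real" where
  "drift r \<nu> \<mu> \<eta> \<sigma> \<rho> = \<nu> - \<eta> * \<rho> * (\<mu> - r) / \<sigma> - \<eta>\<^sup>2 / 2"

definition theta :: "real \<Rightarrow> real \<Rightarrow> real \<Rightarrow> real" where
  "theta lam \<gamma> \<rho> = lam * \<gamma> * (1 - \<rho>\<^sup>2)"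

definition wval :: "real \<Rightarrow> real \<Rightarrow> real \<Rightarrow> real \<Rightarrow> real \<Rightarrow> real \<Rightarrow> real \<Rightarrow> real \<Rightarrow> real \<Rightarrow> real \<Rightarrow> real" where
  "wval T r \<nu> \<mu> \<eta> \<sigma> \<rho> s0 lam \<gamma> =
     lambert_W (s0 * \<eta>\<^sup>2 * T * exp (drift r \<nu> \<mu> \<eta> \<sigma> \<rho> * T) * theta lam \<gamma> \<rho>)"

definition Dval :: "real \<Rightarrow> real \<Rightarrow> real \<Rightarrow> real \<Rightarrow> real \<Rightarrow> real \<Rightarrow> real \<Rightarrow> real \<Rightarrow> real \<Rightarrow> real \<Rightarrow> real" where
  "Dval T r \<nu> \<mu> \<eta> \<sigma> \<rho> s0 lam \<gamma> =
     (let w = wval T r \<nu> \<mu> \<eta> \<sigma> \<rho> s0 lam \<gamma> in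
      lam * exp (- r * T) / (theta lam \<gamma> \<rho> * \<eta>\<^sup>2 * T) * w * (1 + w / 2))"

definition Gval :: "real \<Rightarrow> real \<Rightarrow> real \<Rightarrow> real \<Rightarrow> real \<Rightarrow> real \<Rightarrow> real \<Rightarrow> real \<Rightarrow> real \<Rightarrow> real \<Rightarrow> real" where
  "Gval T r \<nu> \<mu> \<eta> \<sigma> \<rho> s0 lam \<gamma> =
     (let w = wval T r \<nu> \<mu> \<eta> \<sigma> \<rho> s0 lam \<gamma> in
      lam * exp (- r * T) / theta lam \<gamma> \<rho> * (w / (\<eta>\<^sup>2 * T)) * (exp (\<eta>\<^sup>2 / 2 * T) + w / 2))"

(* asking reservation price; N is a standard Gaussian random variable on the probability space M *)
definition pval :: "'a measure \<Rightarrow> ('a \<Rightarrow> real) \<Rightarrow> real \<Rightarrow> real \<Rightarrow> real \<Rightarrow> real \<Rightarrow> real \<Rightarrow> real \<Rightarrow> real \<Rightarrow> real \<Rightarrow> real \<Rightarrow> real \<Rightarrow> real" where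
  "pval M N T r \<nu> \<mu> \<eta> \<sigma> \<rho> s0 lam \<gamma> =
     - (exp (- r * T) / (\<gamma> * (1 - \<rho>\<^sup>2))) *
       ln (prob_space.expectation M (\<lambda>\<omega>. exp (- theta lam \<gamma> \<rho> * s0 * exp (drift r \<nu> \<mu> \<eta> \<sigma> \<rho> * T)
                                                * exp (\<eta> * sqrt T * N \<omega>))))"

definition Vfun :: "real \<Rightarrow> real \<Rightarrow> real \<Rightarrow> real \<Rightarrow> real \<Rightarrow> real \<Rightarrow> real \<Rightarrow> real" where
  "Vfun T r \<mu> \<sigma> \<gamma> x0 q = - (1 / \<gamma>) * exp (- \<gamma> * exp (r * T) * (x0 + q) - (\<mu> - r)\<^sup>2 / (2 * \<sigma>\<^sup>2) * T)"

end

(*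
  Write p = -c ln L with L = E exp(-a e^(sN)), a = theta s0 e^(drift T) and s = eta sqrt T.
  Both bounds on L come from tangent lines of exp. Upper bound: e^(sx) >= e^c (1 + sx - c)
  reduces the integrand to a Gaussian moment generating function. Lower bound: Jensen's
  inequality for the law N(m,1), after writing the standard normal density as a tilt of it.
  The tangent point c = -w and the mean m = -w/s with w e^w = a s^2, i.e. w = W(a s^2), give
  exactly D <= p <= G, and V is increasing in the price.
*)
theory Submission
  imports Defs
begin

lemma ex1_mult_exp_eq:
  fixes y :: real
  assumes "y > - exp (- 1)"
  shows "\<exists>!w. w > - 1 \<and> w * exp w = y"
proof -
  have mono: "u * exp u < v * exp v" if "- 1 \<le> u" "u < v" for u v :: real
  proof (rule DERIV_pos_imp_increasing_open[OF \<open>u < v\<close>])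
    fix x assume "u < x"
    with that have "0 < (1 + x) * exp x" by simp
    moreover have "((\<lambda>x. x * exp x) has_real_derivative (1 + x) * exp x) (at x)"
      by (auto intro!: derivative_eq_intros simp: algebra_simps)
    ultimately show "\<exists>d. ((\<lambda>x. x * exp x) has_real_derivative d) (at x) \<and> d > 0"
      by blast
  qed (intro continuous_intros)
  have "\<exists>w\<ge>- 1. w \<le> \<bar>y\<bar> \<and> w * exp w = y"
  proof (rule IVT)
    show "- 1 * exp (- 1) \<le> y" using assms by simp
    have "\<bar>y\<bar> \<le> \<bar>y\<bar> * exp \<bar>y\<bar>" by (simp add: mult_le_cancel_left1)
    then show "y \<le> \<bar>y\<bar> * exp \<bar>y\<bar>" by linarith
  qed (auto intro!: continuous_intros)
  then obtain w where w: "- 1 \<le> w" "w * exp w = y" by blast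
  with assms have "w \<noteq> - 1" by auto
  with w have "w > - 1" by simp
  with w mono show ?thesis by (metis less_le linorder_neqE_linordered_idom order.asym)
qed

lemma lambert_W_mult_exp:
  assumes "y > - exp (- 1)"
  shows "lambert_W y * exp (lambert_W y) = y"
  using theI'[OF ex1_mult_exp_eq[OF assms]] unfolding lambert_W_def by blast

(* Rewrite with an instantiated m only: std_normal_density is normal_density 0 1, so the rule loops. *)
lemma normal_density_eq_std_tilt:
  "normal_density m 1 x = std_normal_density x * exp (m * x - m\<^sup>2 / 2)"
proof -
  have "- (x - m)\<^sup>2 / 2 = - x\<^sup>2 / 2 + (m * x - m\<^sup>2 / 2)"
    by (simp add: power2_eq_square field_simps)
  then have "exp (- (x - m)\<^sup>2 / 2) = exp (- x\<^sup>2 / 2) * exp (m * x - m\<^sup>2 / 2)"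
    by (simp only: exp_add)
  then show ?thesis
    unfolding normal_density_def by simp
qed

lemma normal_density_mult_exp:
  "normal_density m 1 x * exp (t * x) = exp (m * t + t\<^sup>2 / 2) * normal_density (m + t) 1 x"
proof -
  have "(m * x - m\<^sup>2 / 2) + t * x = (m * t + t\<^sup>2 / 2) + ((m + t) * x - (m + t)\<^sup>2 / 2)"
    by (simp add: power2_eq_square algebra_simps)
  then show ?thesis
    unfolding normal_density_eq_std_tilt[of m] normal_density_eq_std_tilt[of "m + t"]
    by (simp add: exp_add[symmetric] mult_ac)
qed

lemma integrable_normal_density_mult_exp:
  "integrable lborel (\<lambda>x. normal_density m 1 x * exp (t * x))"
  unfolding normal_density_mult_exp by simp

lemma integral_normal_density_mult_exp:
  "(\<integral>x. normal_density m 1 x * exp (t * x) \<partial>lborel) = exp (m * t + t\<^sup>2 / 2)"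
  unfolding normal_density_mult_exp by simp

definition lognormal_laplace :: "real \<Rightarrow> real \<Rightarrow> real" where
  "lognormal_laplace s a = (\<integral>x. std_normal_density x * exp (- a * exp (s * x)) \<partial>lborel)"

lemma integrable_lognormal_laplace:
  assumes "a \<ge> 0"
  shows "integrable lborel (\<lambda>x. std_normal_density x * exp (- a * exp (s * x)))"
proof -
  have "norm (std_normal_density x * exp (- a * exp (s * x))) \<le> norm (std_normal_density x)" for x
    using assms by (simp add: abs_mult mult_left_le)
  then show ?thesis
    by (intro Bochner_Integration.integrable_bound[OF integrable_normal_density]) auto
qed

lemma expectation_eq_lognormal_laplace:
  assumes "distributed M lborel N std_normal_density"
  shows "(\<integral>\<omega>. exp (- a * exp (s * N \<omega>)) \<partial>M) = lognormal_laplace s a"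
  unfolding lognormal_laplace_def by (rule distributed_integral[OF assms, symmetric]) auto

lemma lognormal_laplace_le_tangent:
  assumes "a \<ge> 0"
  shows "lognormal_laplace s a \<le> exp (- a * exp c * (1 - c) + (a * exp c * s)\<^sup>2 / 2)"
proof -
  define k where "k = a * exp c * s"
  have tangent: "exp (- a * exp (s * x)) \<le> exp (- a * exp c * (1 - c)) * exp ((- k) * x)" for x
  proof -
    have "exp c * (1 + (s * x - c)) \<le> exp c * exp (s * x - c)"
      by (intro mult_left_mono exp_ge_add_one_self) auto
    also have "\<dots> = exp (s * x)" by (simp add: exp_diff)
    finally have "- a * exp (s * x) \<le> - a * exp c * (1 - c) + (- k) * x"
      using mult_left_mono[OF _ assms] unfolding k_def by (fastforce simp: algebra_simps)
    then show ?thesis by (simp flip: exp_add)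
  qed
  have "lognormal_laplace s a
      \<le> (\<integral>x. exp (- a * exp c * (1 - c)) * (std_normal_density x * exp ((- k) * x)) \<partial>lborel)"
    unfolding lognormal_laplace_def
  proof (rule integral_mono)
    show "std_normal_density x * exp (- a * exp (s * x))
        \<le> exp (- a * exp c * (1 - c)) * (std_normal_density x * exp ((- k) * x))" for x
      using mult_left_mono[OF tangent[of x] normal_density_nonneg[of 0 1 x]] by (simp only: mult_ac)
  qed (use integrable_lognormal_laplace[OF assms] integrable_normal_density_mult_exp[of 0 "- k"] in auto)
  also have "\<dots> = exp (- a * exp c * (1 - c) + k\<^sup>2 / 2)"
    using integral_normal_density_mult_exp[of 0 "- k"] by (simp add: exp_add[symmetric])
  finally show ?thesis unfolding k_def .
qed

(* Jensen for N(m,1): its density times e^Z x is the integrand, and e^Z lies above its tangent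
   at C, the mean of Z under N(m,1). *)
lemma exp_le_lognormal_laplace:
  assumes "a \<ge> 0"
  shows "exp (- a * exp (m * s + s\<^sup>2 / 2) - m\<^sup>2 / 2) \<le> lognormal_laplace s a"
proof -
  define C where "C = - a * exp (m * s + s\<^sup>2 / 2) - m\<^sup>2 / 2"
  define Z where "Z x = - a * exp (s * x) - m * x + m\<^sup>2 / 2" for x
  define R where "R x = exp C * ((1 - C + m\<^sup>2 / 2) * normal_density m 1 x
      - a * (normal_density m 1 x * exp (s * x)) - m * (normal_density m 1 x * x))" for x
  have R_le: "R x \<le> std_normal_density x * exp (- a * exp (s * x))" for x
  proof -
    have "exp C * (1 + (Z x - C)) \<le> exp C * exp (Z x - C)"
      by (intro mult_left_mono exp_ge_add_one_self) auto
    then have "normal_density m 1 x * (exp C * (1 + (Z x - C))) \<le> normal_density m 1 x * exp (Z x)"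
      by (intro mult_left_mono) (auto simp: exp_diff)
    moreover have "normal_density m 1 x * exp (Z x) = std_normal_density x * exp (- a * exp (s * x))"
      unfolding normal_density_eq_std_tilt[of m] Z_def by (simp add: mult.assoc flip: exp_add)
    moreover have "normal_density m 1 x * (exp C * (1 + (Z x - C))) = R x"
      unfolding R_def Z_def by (simp add: algebra_simps)
    ultimately show ?thesis by simp
  qed
  have "integral\<^sup>L lborel R = exp C * ((1 - C + m\<^sup>2 / 2) - a * exp (m * s + s\<^sup>2 / 2) - m * m)"
    unfolding R_def
    by (simp add: integrable_normal_density_mult_exp integrable_normal_moment_nz_1
        integral_normal_density_mult_exp integral_normal_moment_nz_1)
  also have "\<dots> = exp C" unfolding C_def by (simp add: power2_eq_square)
  finally have "integral\<^sup>L lborel R = exp C" .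
  moreover have "integral\<^sup>L lborel R \<le> lognormal_laplace s a"
    unfolding lognormal_laplace_def
  proof (rule integral_mono[OF _ integrable_lognormal_laplace[OF assms] R_le])
    show "integrable lborel R"
      unfolding R_def by (simp add: integrable_normal_density_mult_exp integrable_normal_moment_nz_1)
  qed
  ultimately show ?thesis unfolding C_def by simp
qed

lemma lognormal_laplace_bounds:
  assumes "a \<ge> 0" and "s \<noteq> 0" and lambert: "w * exp w = a * s\<^sup>2"
  shows "exp (- (w / s\<^sup>2) * (exp (s\<^sup>2 / 2) + w / 2)) \<le> lognormal_laplace s a"
    and "lognormal_laplace s a \<le> exp (- (w / s\<^sup>2) * (1 + w / 2))"
proof -
  have aw: "a * exp (- w) = w / s\<^sup>2"
    using lambert assms(2) by (simp add: exp_minus field_simps)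
  have "a * exp (- (w / s) * s + s\<^sup>2 / 2) = w / s\<^sup>2 * exp (s\<^sup>2 / 2)"
    using assms(2) by (simp add: aw[symmetric] flip: exp_add)
  then have "- a * exp (- (w / s) * s + s\<^sup>2 / 2) - (- (w / s))\<^sup>2 / 2
      = - (w / s\<^sup>2) * (exp (s\<^sup>2 / 2) + w / 2)"
    using assms(2) by (simp add: power2_eq_square field_simps)
  then show "exp (- (w / s\<^sup>2) * (exp (s\<^sup>2 / 2) + w / 2)) \<le> lognormal_laplace s a"
    using exp_le_lognormal_laplace[OF assms(1), of "- (w / s)" s] by simp
  have "- a * exp (- w) * (1 - - w) + (a * exp (- w) * s)\<^sup>2 / 2 = - (w / s\<^sup>2) * (1 + w / 2)"
    unfolding mult_minus_left aw using assms(2) by (simp add: power2_eq_square field_simps)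
  then show "lognormal_laplace s a \<le> exp (- (w / s\<^sup>2) * (1 + w / 2))"
    using lognormal_laplace_le_tangent[OF assms(1), of s "- w"] by simp
qed

lemma minus_ln_lognormal_laplace_bounds:
  assumes "a \<ge> 0" and "s \<noteq> 0" and "w * exp w = a * s\<^sup>2"
  shows "w / s\<^sup>2 * (1 + w / 2) \<le> - ln (lognormal_laplace s a)"
    and "- ln (lognormal_laplace s a) \<le> w / s\<^sup>2 * (exp (s\<^sup>2 / 2) + w / 2)"
proof -
  note bounds = lognormal_laplace_bounds[OF assms]
  have pos: "lognormal_laplace s a > 0"
    using bounds(1) by (rule less_le_trans[OF exp_gt_zero])
  show "w / s\<^sup>2 * (1 + w / 2) \<le> - ln (lognormal_laplace s a)"
    using ln_le_cancel_iff[OF pos exp_gt_zero, THEN iffD2, OF bounds(2)] by simp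
  show "- ln (lognormal_laplace s a) \<le> w / s\<^sup>2 * (exp (s\<^sup>2 / 2) + w / 2)"
    using ln_le_cancel_iff[OF exp_gt_zero pos, THEN iffD2, OF bounds(1)] by simp
qed

lemma Vfun_mono:
  assumes "\<gamma> > 0" and "q1 \<le> q2"
  shows "Vfun T r \<mu> \<sigma> \<gamma> x0 q1 \<le> Vfun T r \<mu> \<sigma> \<gamma> x0 q2"
proof -
  have "\<gamma> * exp (r * T) * (x0 + q1) \<le> \<gamma> * exp (r * T) * (x0 + q2)"
    using assms by (intro mult_left_mono) auto
  then show ?thesis
    unfolding Vfun_def using assms(1) by (simp add: divide_simps)
qed

theorem theorem4:
  fixes M :: "'a measure" and N :: "'a \<Rightarrow> real"
    and T r \<nu> \<mu> x0 \<eta> \<sigma> \<rho> s0 lam \<gamma> :: real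
  assumes "prob_space M"
    and "distributed M lborel N std_normal_density"
    and "T > 0" and "\<eta> > 0" and "\<sigma> > 0" and "-1 < \<rho>" and "\<rho> < 1"
    and "s0 > 0" and "lam > 0" and "\<gamma> > 0"
  shows "Dval T r \<nu> \<mu> \<eta> \<sigma> \<rho> s0 lam \<gamma> \<le> pval M N T r \<nu> \<mu> \<eta> \<sigma> \<rho> s0 lam \<gamma>
       \<and> pval M N T r \<nu> \<mu> \<eta> \<sigma> \<rho> s0 lam \<gamma> \<le> Gval T r \<nu> \<mu> \<eta> \<sigma> \<rho> s0 lam \<gamma>
       \<and> Vfun T r \<mu> \<sigma> \<gamma> x0 (Dval T r \<nu> \<mu> \<eta> \<sigma> \<rho> s0 lam \<gamma>)
           \<le> Vfun T r \<mu> \<sigma> \<gamma> x0 (pval M N T r \<nu> \<mu> \<eta> \<sigma> \<rho> s0 lam \<gamma>)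
       \<and> Vfun T r \<mu> \<sigma> \<gamma> x0 (pval M N T r \<nu> \<mu> \<eta> \<sigma> \<rho> s0 lam \<gamma>)
           \<le> Vfun T r \<mu> \<sigma> \<gamma> x0 (Gval T r \<nu> \<mu> \<eta> \<sigma> \<rho> s0 lam \<gamma>)"
proof -
  define a where "a = theta lam \<gamma> \<rho> * s0 * exp (drift r \<nu> \<mu> \<eta> \<sigma> \<rho> * T)"
  define s where "s = \<eta> * sqrt T"
  define w where "w = wval T r \<nu> \<mu> \<eta> \<sigma> \<rho> s0 lam \<gamma>"
  define c where "c = exp (- r * T) / (\<gamma> * (1 - \<rho>\<^sup>2))"
  have "\<rho>\<^sup>2 < 1"
    using assms(6,7) by (simp add: abs_square_less_1)
  then have pos: "a > 0" "c > 0" "s \<noteq> 0" "1 - \<rho>\<^sup>2 \<noteq> 0"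
    unfolding a_def c_def s_def theta_def using assms by simp_all
  have s2: "s\<^sup>2 = \<eta>\<^sup>2 * T"
    unfolding s_def using assms(3) by (simp add: power_mult_distrib)
  have "w = lambert_W (a * s\<^sup>2)"
    unfolding w_def wval_def s2 a_def by (simp add: mult_ac)
  moreover have "a * s\<^sup>2 > 0"
    using pos by simp
  then have "a * s\<^sup>2 > - exp (- 1)"
    using exp_gt_zero[of "- 1"] by linarith
  ultimately have "w * exp w = a * s\<^sup>2"
    using lambert_W_mult_exp by simp
  note bounds = minus_ln_lognormal_laplace_bounds[OF less_imp_le[OF pos(1)] pos(3) this]
  have D: "Dval T r \<nu> \<mu> \<eta> \<sigma> \<rho> s0 lam \<gamma> = c * (w / s\<^sup>2 * (1 + w / 2))"
    unfolding Dval_def Let_def w_def[symmetric] c_def s2 theta_def using assms pos by (simp add: field_simps)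
  have G: "Gval T r \<nu> \<mu> \<eta> \<sigma> \<rho> s0 lam \<gamma> = c * (w / s\<^sup>2 * (exp (s\<^sup>2 / 2) + w / 2))"
    unfolding Gval_def Let_def w_def[symmetric] c_def s2 theta_def using assms pos by (simp add: field_simps)
  have P: "pval M N T r \<nu> \<mu> \<eta> \<sigma> \<rho> s0 lam \<gamma> = c * - ln (lognormal_laplace s a)"
    using expectation_eq_lognormal_laplace[OF assms(2), of a s]
    unfolding pval_def a_def s_def c_def by (simp add: mult_ac)
  have "Dval T r \<nu> \<mu> \<eta> \<sigma> \<rho> s0 lam \<gamma> \<le> pval M N T r \<nu> \<mu> \<eta> \<sigma> \<rho> s0 lam \<gamma>"
    unfolding D P by (rule mult_left_mono[OF bounds(1)]) (use pos in simp)
  moreover have "pval M N T r \<nu> \<mu> \<eta> \<sigma> \<rho> s0 lam \<gamma> \<le> Gval T r \<nu> \<mu> \<eta> \<sigma> \<rho> s0 lam \<gamma>"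
    unfolding G P by (rule mult_left_mono[OF bounds(2)]) (use pos in simp)
  ultimately show ?thesis
    using Vfun_mono[OF assms(10)] by blast
qed

end
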